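(* Let $\lambda$ be a nonzero real number and $n$ a positive integer. Then $$(n-1)!\,H_{n,-\lambda}=\sum_{k=1}^{n}(-1)^{n-k}\beta_{k-1,\lambda}(1-\lambda)\,S_{1,-\lambda}(n,k).$$
   Context: For a nonzero real parameter $\mu$ (used here with $\mu=\lambda$ and $\mu=-\lambda$), real $y$ and integer $k\ge0$: $(y)_{0,\mu}=1$, $(y)_{k,\mu}=y(y-\mu)\cdots(y-(k-1)\mu)$; $(y)_0=1$, $(y)_k=y(y-1)\cdots(y-k+1)$. The degenerate exponential is $e_\mu^x(t)=\sum_{k\ge0}(x)_{k,\mu}t^k/k!=(1+\mu t)^{x/\mu}$, $e_\mu(t)=e^1_\mu(t)$. The degenerate Bernoulli polynomials are defined by $\frac{t}{e_\mu(t)-1}e_\mu^x(t)=\sum_{n\ge0}\beta_{n,\mu}(x)\frac{t^n}{n!}$. The degenerate Stirling numbers of the first kind $S_{1,\mu}(n,k)$ are defined by $(x)_{n}=\sum_{k=0}^{n}S_{1,\mu}(n,k)(x)_{k,\mu}$ ($n\ge0$). The degenerate harmonic numbers are $H_{0,\mu}=0$ and $H_{n,\mu}=\sum_{k=1}^{n}\frac{1}{\mu}\binom{\mu}{k}(-1)^{k-1}$ for $n\ge1$. *)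

theory Defs
  imports Complex_Main "HOL-Computational_Algebra.Formal_Power_Series"
begin

definition dfall :: "real \<Rightarrow> nat \<Rightarrow> real \<Rightarrow> real" where
  "dfall mu k y = (\<Prod>i<k. (y - of_nat i * mu))"

definition ffall :: "nat \<Rightarrow> real \<Rightarrow> real" where
  "ffall k y = (\<Prod>i<k. (y - of_nat i))"

definition dexp_fps :: "real \<Rightarrow> real \<Rightarrow> real fps" where
  "dexp_fps mu x = Abs_fps (\<lambda>k. dfall mu k x / fact k)"

definition dbernoulli :: "nat \<Rightarrow> real \<Rightarrow> real \<Rightarrow> real" where
  "dbernoulli n mu x =
     fact n * fps_nth (fps_X / (dexp_fps mu 1 - 1) * dexp_fps mu x) n"

definition dstirling1 :: "real \<Rightarrow> nat \<Rightarrow> nat \<Rightarrow> real" where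
  "dstirling1 mu n k =
     (THE s :: nat \<Rightarrow> real. (\<forall>x. ffall n x = (\<Sum>j\<le>n. s j * dfall mu j x))
                           \<and> (\<forall>j>n. s j = 0)) k"

definition dharmonic :: "nat \<Rightarrow> real \<Rightarrow> real" where
  "dharmonic n mu = (\<Sum>k=1..n. (1 / mu) * (mu gchoose k) * (-1) ^ (k - 1))"

end

theory Submission
  imports Defs "HOL-Analysis.Weierstrass_Theorems"
begin

(* Put c_k = (-1)^(n-k) S_(1,-lambda)(n,k). Reflecting x to -x turns the expansion defining
   S_(1,-lambda) into <x>_n = sum_k c_k (x)_(k,lambda) for the rising factorial <x>_n, hence
   sum_k c_k (x)_(k-1,lambda) = <x+lambda+1>_(n-1), and R(x) = <x+lambda>_n / n is an
   antidifference of this polynomial.  Since beta_(k,lambda)(x+1) - beta_(k,lambda)(x) =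
   k (x)_(k-1,lambda), the polynomial F = sum_k c_k beta_(k,lambda) / k differs from R by a
   1-periodic polynomial, i.e. by a constant.  Taking lambda-differences instead, with
   beta_(k,lambda)(x+lambda) - beta_(k,lambda)(x) = lambda k beta_(k-1,lambda)(x), gives
   lambda sum_k c_k beta_(k-1,lambda)(1-lambda) = R(1) - R(1-lambda) = (<1+lambda>_n - n!) / n,
   and a telescoping sum shows lambda n! H_(n,-lambda) = <1+lambda>_n - n!. *)

lemma real_polynomial_function_eq_if_infinite_agreement:
  fixes f g :: "real \<Rightarrow> real"
  assumes "real_polynomial_function f" "real_polynomial_function g"
    and "infinite {x. f x = g x}"
  shows "f x = g x"
proof -
  obtain a m where fg: "(\<lambda>x. f x - g x) = (\<lambda>x. \<Sum>i\<le>m. a i * x ^ i)"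
    using assms(1,2) real_polynomial_function_diff real_polynomial_function_iff_sum by blast
  have "{x. f x = g x} = {x. (\<Sum>i\<le>m. a i * x ^ i) = 0}"
    using fg by (metis (mono_tags) eq_iff_diff_eq_0)
  then have "\<forall>i\<le>m. a i = 0"
    using assms(3) polyfun_finite_roots by auto
  then show ?thesis
    using fun_cong[OF fg, of x] by simp
qed

lemma periodic_real_polynomial_function_const:
  fixes f :: "real \<Rightarrow> real"
  assumes "real_polynomial_function f" and "\<And>x. f (x + 1) = f x"
  shows "f x = f 0"
proof -
  have "f (of_nat j) = f 0" for j
  proof (induction j)
    case (Suc j)
    then show ?case
      using assms(2)[of "of_nat j"] by (simp add: add.commute)
  qed simp
  then have "range (of_nat :: nat \<Rightarrow> real) \<subseteq> {x. f x = f 0}"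
    by auto
  then have "infinite {x. f x = f 0}"
    using infinite_UNIV_char_0 by (meson finite_imageD finite_subset inj_of_nat)
  then show ?thesis
    using real_polynomial_function_eq_if_infinite_agreement[OF assms(1)
        real_polynomial_function.intros(2)] by blast
qed

lemma real_polynomial_function_pochhammer:
  "real_polynomial_function f \<Longrightarrow> real_polynomial_function (\<lambda>x. pochhammer (f x) n)"
  unfolding pochhammer_prod
  by (intro real_polynomial_function_prod real_polynomial_function.intros(2-3)) auto

lemma dfall_0 [simp]: "dfall mu 0 y = 1"
  by (simp add: dfall_def)

lemma dfall_Suc_left: "dfall mu (Suc k) y = y * dfall mu k (y - mu)"
  unfolding dfall_def prod.lessThan_Suc_shift by (simp add: algebra_simps)

lemma dfall_minus: "dfall mu k x = (-1) ^ k * dfall (- mu) k (- x)"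
proof -
  have "dfall mu k x = (\<Prod>i<k. (-1) * (- x - of_nat i * (- mu)))"
    unfolding dfall_def by (intro prod.cong) auto
  also have "\<dots> = (\<Prod>i<k. -1) * dfall (- mu) k (- x)"
    unfolding dfall_def by (rule prod.distrib)
  finally show ?thesis
    by simp
qed

lemma ffall_minus: "ffall n (- x) = (-1) ^ n * pochhammer x n"
proof -
  have "ffall n (- x) = (\<Prod>i<n. (-1) * (x + of_nat i))"
    unfolding ffall_def by (intro prod.cong) auto
  also have "\<dots> = (\<Prod>i<n. -1) * pochhammer x n"
    unfolding pochhammer_prod atLeast0LessThan by (rule prod.distrib)
  finally show ?thesis
    by simp
qed

lemma dfall_eq_gbinomial:
  assumes "mu \<noteq> 0"
  shows "dfall mu k y = mu ^ k * (fact k * ((y / mu) gchoose k))"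
proof -
  have "dfall mu k y = (\<Prod>i<k. mu * (y / mu - of_nat i))"
    unfolding dfall_def using assms by (intro prod.cong) (auto simp: field_simps)
  also have "\<dots> = mu ^ k * (\<Prod>i<k. y / mu - of_nat i)"
    by (simp add: prod.distrib)
  finally show ?thesis
    by (simp add: gbinomial_mult_fact atLeast0LessThan)
qed

lemma real_polynomial_function_dfall: "real_polynomial_function (dfall mu k)"
  unfolding dfall_def
  by (intro real_polynomial_function_prod real_polynomial_function_diff
      real_polynomial_function.intros(1)[OF bounded_linear_ident]
      real_polynomial_function.intros(2)) auto

lemma fps_nth_dexp_fps [simp]: "fps_nth (dexp_fps mu x) k = dfall mu k x / fact k"
  by (simp add: dexp_fps_def)

lemma dexp_fps_add:
  assumes "mu \<noteq> 0"
  shows "dexp_fps mu (x + y) = dexp_fps mu x * dexp_fps mu y"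
proof (rule fps_ext)
  fix n
  have "fps_nth (dexp_fps mu (x + y)) n = mu ^ n * ((x / mu + y / mu) gchoose n)"
    using assms by (simp add: dfall_eq_gbinomial add_divide_distrib)
  also have "\<dots> = (\<Sum>k=0..n. (mu ^ k * (x / mu gchoose k)) * (mu ^ (n - k) * (y / mu gchoose (n - k))))"
    unfolding gbinomial_Vandermonde[symmetric] sum_distrib_left
    by (intro sum.cong refl) (auto simp: mult_ac simp flip: power_add)
  also have "\<dots> = fps_nth (dexp_fps mu x * dexp_fps mu y) n"
    using assms by (simp add: fps_mult_nth dfall_eq_gbinomial)
  finally show "fps_nth (dexp_fps mu (x + y)) n = fps_nth (dexp_fps mu x * dexp_fps mu y) n" .
qed

lemma dexp_fps_self: "dexp_fps mu mu = 1 + fps_const mu * fps_X"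
proof (rule fps_ext)
  fix n
  consider "n = 0" | "n = 1" | k where "n = Suc (Suc k)"
    by (metis One_nat_def not0_implies_Suc)
  then show "fps_nth (dexp_fps mu mu) n = fps_nth (1 + fps_const mu * fps_X) n"
    by cases (simp_all add: dfall_Suc_left)
qed

lemma real_polynomial_function_dbernoulli: "real_polynomial_function (dbernoulli n mu)"
  unfolding dbernoulli_def fps_mult_nth fps_nth_dexp_fps
  by (intro real_polynomial_function.intros(2,4) real_polynomial_function_sum
      real_polynomial_function_divide real_polynomial_function_dfall) auto

lemma dbernoulli_add_diff:
  assumes "mu \<noteq> 0"
  shows "dbernoulli n mu (y + a) - dbernoulli n mu y
    = fact n * fps_nth (fps_X / (dexp_fps mu 1 - 1) * (dexp_fps mu a - 1) * dexp_fps mu y) n"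
proof -
  have "fps_X / (dexp_fps mu 1 - 1) * dexp_fps mu (y + a) - fps_X / (dexp_fps mu 1 - 1) * dexp_fps mu y
      = fps_X / (dexp_fps mu 1 - 1) * (dexp_fps mu a - 1) * dexp_fps mu y"
    unfolding dexp_fps_add[OF assms, of y a] by (simp add: algebra_simps)
  then show ?thesis
    unfolding dbernoulli_def by (metis fps_sub_nth right_diff_distrib)
qed

lemma fps_X_divide_dexp_fps_times: "fps_X / (dexp_fps mu 1 - 1) * (dexp_fps mu 1 - 1) = fps_X"
proof (rule fps_times_divide_eq)
  have coeff_1: "fps_nth (dexp_fps mu 1 - 1) 1 \<noteq> 0"
    by (simp add: dfall_def)
  then show "dexp_fps mu 1 - 1 \<noteq> 0"
    by (metis fps_zero_nth)
  show "subdegree (dexp_fps mu 1 - 1) \<le> subdegree (fps_X :: real fps)"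
    using subdegree_leI[OF coeff_1] by simp
qed

lemma dbernoulli_Suc_add_1_diff:
  assumes "mu \<noteq> 0"
  shows "dbernoulli (Suc k) mu (y + 1) - dbernoulli (Suc k) mu y = of_nat (Suc k) * dfall mu k y"
proof -
  have gf: "fps_X / (dexp_fps mu 1 - 1) * (dexp_fps mu 1 - 1) * dexp_fps mu y = fps_X * dexp_fps mu y"
    by (simp only: fps_X_divide_dexp_fps_times)
  show ?thesis
    unfolding dbernoulli_add_diff[OF assms] gf fps_X_mult_nth fps_nth_dexp_fps fact_Suc by simp
qed

lemma dbernoulli_Suc_add_self_diff:
  assumes "mu \<noteq> 0"
  shows "dbernoulli (Suc k) mu (y + mu) - dbernoulli (Suc k) mu y = mu * of_nat (Suc k) * dbernoulli k mu y"
proof -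
  have gf: "fps_X / (dexp_fps mu 1 - 1) * (dexp_fps mu mu - 1) * dexp_fps mu y
      = fps_X * (fps_const mu * (fps_X / (dexp_fps mu 1 - 1) * dexp_fps mu y))"
    by (simp add: dexp_fps_self mult_ac)
  show ?thesis
    unfolding dbernoulli_add_diff[OF assms] gf
    unfolding fps_X_mult_nth fps_mult_left_const_nth dbernoulli_def fact_Suc by simp
qed

lemma sum_dbernoulli_eq_antidifference_diff:
  assumes "mu \<noteq> 0" and "real_polynomial_function R"
    and R_diff: "\<And>x. R (x + 1) - R x = (\<Sum>k=1..n. c k * dfall mu (k - 1) x)"
  shows "mu * (\<Sum>k=1..n. c k * dbernoulli (k - 1) mu y) = R (y + mu) - R y"
proof -
  define F where "F y = (\<Sum>k=1..n. c k * dbernoulli k mu y / of_nat k)" for y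
  have F_diff: "F (y + a) - F y = (\<Sum>k=1..n. c k * (dbernoulli k mu (y + a) - dbernoulli k mu y) / of_nat k)"
    for y a
    by (simp only: F_def sum_subtractf[symmetric] right_diff_distrib diff_divide_distrib)
  have F_diff_1: "F (x + 1) - F x = R (x + 1) - R x" for x
    unfolding F_diff R_diff
  proof (intro sum.cong refl)
    fix k
    assume "k \<in> {1..n}"
    then obtain j where "k = Suc j"
      by (cases k) auto
    then show "c k * (dbernoulli k mu (x + 1) - dbernoulli k mu x) / of_nat k = c k * dfall mu (k - 1) x"
      by (simp add: dbernoulli_Suc_add_1_diff[OF assms(1)] del: of_nat_Suc)
  qed
  have "F (x + 1) - R (x + 1) = F x - R x" for x
    using F_diff_1[of x] by linarith
  moreover have "real_polynomial_function (\<lambda>x. F x - R x)"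
    unfolding F_def
    by (intro real_polynomial_function_diff real_polynomial_function_sum real_polynomial_function_divide
        real_polynomial_function.intros(2,4) real_polynomial_function_dbernoulli assms(2)) auto
  ultimately have periodic: "F z - R z = F 0 - R 0" for z
    using periodic_real_polynomial_function_const[of "\<lambda>x. F x - R x"] by blast
  have F_diff_mu: "F (y + mu) - F y = mu * (\<Sum>k=1..n. c k * dbernoulli (k - 1) mu y)"
    unfolding F_diff sum_distrib_left
  proof (intro sum.cong refl)
    fix k
    assume "k \<in> {1..n}"
    then obtain j where "k = Suc j"
      by (cases k) auto
    then show "c k * (dbernoulli k mu (y + mu) - dbernoulli k mu y) / of_nat k
        = mu * (c k * dbernoulli (k - 1) mu y)"
      by (simp add: dbernoulli_Suc_add_self_diff[OF assms(1)] del: of_nat_Suc)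
  qed
  show ?thesis
    using periodic[of "y + mu"] periodic[of y] F_diff_mu by linarith
qed

(* The recurrence comes from (x)_(n+1) = (x)_n (x - n) together with
   (x)_(k,mu) (x - n) = (x)_(k+1,mu) + (k mu - n) (x)_(k,mu). *)
fun dstirling1_rec :: "real \<Rightarrow> nat \<Rightarrow> nat \<Rightarrow> real" where
  "dstirling1_rec mu 0 k = (if k = 0 then 1 else 0)"
| "dstirling1_rec mu (Suc n) k =
    (if k = 0 then 0 else dstirling1_rec mu n (k - 1)) + (of_nat k * mu - of_nat n) * dstirling1_rec mu n k"

lemma dstirling1_rec_Suc_0 [simp]: "dstirling1_rec mu (Suc n) 0 = 0"
  by (induction n) auto

lemma dstirling1_rec_eq_0: "n < k \<Longrightarrow> dstirling1_rec mu n k = 0"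
  by (induction n arbitrary: k) auto

lemma ffall_eq_sum_dstirling1_rec: "ffall n x = (\<Sum>j\<le>n. dstirling1_rec mu n j * dfall mu j x)"
proof (induction n)
  case 0
  then show ?case
    by (simp add: ffall_def)
next
  case (Suc n)
  let ?s = "dstirling1_rec mu n"
  have "ffall (Suc n) x = (\<Sum>j\<le>n. ?s j * (dfall mu j x * (x - of_nat n)))"
    using Suc by (simp add: ffall_def sum_distrib_right mult.assoc)
  also have "\<dots> = (\<Sum>j\<le>n. ?s j * dfall mu (Suc j) x)
      + (\<Sum>j\<le>n. (of_nat j * mu - of_nat n) * ?s j * dfall mu j x)"
    by (simp add: dfall_def sum.distrib[symmetric] algebra_simps)
  also have "(\<Sum>j\<le>n. ?s j * dfall mu (Suc j) x)
      = (\<Sum>j\<le>Suc n. (if j = 0 then 0 else ?s (j - 1)) * dfall mu j x)"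
    unfolding sum.atMost_Suc_shift by simp
  also have "(\<Sum>j\<le>n. (of_nat j * mu - of_nat n) * ?s j * dfall mu j x)
      = (\<Sum>j\<le>Suc n. (of_nat j * mu - of_nat n) * ?s j * dfall mu j x)"
    by (simp add: dstirling1_rec_eq_0)
  finally show ?case
    by (simp add: sum.distrib[symmetric] algebra_simps)
qed

(* Evaluating at x = i mu kills every (x)_(j,mu) with j > i. *)
lemma dfall_coeffs_eq_0:
  assumes "mu \<noteq> 0" and "\<And>x. (\<Sum>j\<le>n. s j * dfall mu j x) = 0" and "i \<le> n"
  shows "s i = 0"
  using assms(3)
proof (induction i rule: less_induct)
  case (less i)
  have vanish: "dfall mu j (of_nat i * mu) = 0" if "i < j" for j
    unfolding dfall_def using that by (intro prod_zero) auto
  have "(\<Sum>j\<le>n. s j * dfall mu j (of_nat i * mu)) = (\<Sum>j\<le>n. if j = i then s i * dfall mu i (of_nat i * mu) else 0)"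
    using less.IH vanish by (intro sum.cong refl) (auto simp: neq_iff)
  also have "\<dots> = s i * dfall mu i (of_nat i * mu)"
    using less.prems by simp
  finally have "s i * dfall mu i (of_nat i * mu) = 0"
    using assms(2) by simp
  moreover have "dfall mu i (of_nat i * mu) \<noteq> 0"
    unfolding dfall_def using assms(1) by (auto simp: algebra_simps)
  ultimately show ?case
    by simp
qed

lemma dstirling1_eq_rec:
  assumes "mu \<noteq> 0"
  shows "dstirling1 mu n = dstirling1_rec mu n"
  unfolding dstirling1_def
proof (rule the_equality)
  show "(\<forall>x. ffall n x = (\<Sum>j\<le>n. dstirling1_rec mu n j * dfall mu j x)) \<and> (\<forall>j>n. dstirling1_rec mu n j = 0)"
    by (intro conjI allI impI ffall_eq_sum_dstirling1_rec dstirling1_rec_eq_0)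
next
  fix s
  assume s: "(\<forall>x. ffall n x = (\<Sum>j\<le>n. s j * dfall mu j x)) \<and> (\<forall>j>n. s j = 0)"
  have diff: "(\<Sum>j\<le>n. (s j - dstirling1_rec mu n j) * dfall mu j x) = 0" for x
  proof -
    have "(\<Sum>j\<le>n. s j * dfall mu j x) = ffall n x"
      using s by simp
    also have "\<dots> = (\<Sum>j\<le>n. dstirling1_rec mu n j * dfall mu j x)"
      by (rule ffall_eq_sum_dstirling1_rec)
    finally show ?thesis
      by (simp add: left_diff_distrib sum_subtractf)
  qed
  show "s = dstirling1_rec mu n"
  proof
    fix j
    show "s j = dstirling1_rec mu n j"
    proof (cases "j \<le> n")
      case True
      then show ?thesis
        using dfall_coeffs_eq_0[OF assms diff True] by simp
    next
      case False
      then show ?thesis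
        using s dstirling1_rec_eq_0[of n j mu] by simp
    qed
  qed
qed

lemma pochhammer_eq_sum_dstirling1:
  assumes "lam \<noteq> 0" and "n \<ge> 1"
  shows "pochhammer x n = (\<Sum>k=1..n. (-1) ^ (n - k) * dstirling1 (- lam) n k * dfall lam k x)"
proof -
  have "pochhammer x n = (-1) ^ n * ffall n (- x)"
    by (simp add: ffall_minus flip: power_mult_distrib)
  also have "\<dots> = (\<Sum>k\<le>n. (-1) ^ n * dstirling1_rec (- lam) n k * dfall (- lam) k (- x))"
    by (simp add: ffall_eq_sum_dstirling1_rec[of n _ "- lam"] sum_distrib_left mult.assoc)
  also have "\<dots> = (\<Sum>k\<le>n. (-1) ^ (n - k) * dstirling1_rec (- lam) n k * dfall lam k x)"
  proof (intro sum.cong refl)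
    fix k
    assume "k \<in> {..n}"
    then have "(-1 :: real) ^ n = (-1) ^ (n - k) * (-1) ^ k"
      by (simp flip: power_add)
    then show "(-1) ^ n * dstirling1_rec (- lam) n k * dfall (- lam) k (- x)
        = (-1) ^ (n - k) * dstirling1_rec (- lam) n k * dfall lam k x"
      by (simp add: dfall_minus[of lam k x])
  qed
  also have "\<dots> = (\<Sum>k=1..n. (-1) ^ (n - k) * dstirling1_rec (- lam) n k * dfall lam k x)"
  proof -
    have "{..n} = insert 0 {1..n}"
      by auto
    moreover have "dstirling1_rec (- lam) n 0 = 0"
      using assms(2) by (metis Suc_le_D dstirling1_rec_Suc_0 One_nat_def)
    ultimately show ?thesis
      by simp
  qed
  finally show ?thesis
    using assms(1) by (simp add: dstirling1_eq_rec)
qed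

lemma pochhammer_pred_eq_sum_dstirling1:
  assumes "lam \<noteq> 0" and "n \<ge> 1"
  shows "pochhammer (x + lam + 1) (n - 1)
    = (\<Sum>k=1..n. (-1) ^ (n - k) * dstirling1 (- lam) n k * dfall lam (k - 1) x)"
proof -
  let ?S = "\<lambda>x. \<Sum>k=1..n. (-1) ^ (n - k) * dstirling1 (- lam) n k * dfall lam (k - 1) x"
  have "pochhammer (x + lam + 1) (n - 1) = ?S x" if "x \<noteq> - lam" for x
  proof -
    have "(x + lam) * ?S x = (\<Sum>k=1..n. (-1) ^ (n - k) * dstirling1 (- lam) n k * dfall lam k (x + lam))"
      unfolding sum_distrib_left
      by (intro sum.cong refl) (auto simp: dfall_Suc_left dest!: Suc_le_D)
    also have "\<dots> = pochhammer (x + lam) n"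
      using pochhammer_eq_sum_dstirling1[OF assms] by simp
    also have "\<dots> = (x + lam) * pochhammer (x + lam + 1) (n - 1)"
      using assms(2) pochhammer_rec[of "x + lam" "n - 1"] by simp
    finally show ?thesis
      using that by simp
  qed
  then have "{x. x \<noteq> - lam} \<subseteq> {x. pochhammer (x + lam + 1) (n - 1) = ?S x}"
    by auto
  moreover have "infinite {x :: real. x \<noteq> - lam}"
    using infinite_UNIV_char_0 by (simp add: Collect_neg_eq Diff_infinite_finite)
  ultimately have "infinite {x. pochhammer (x + lam + 1) (n - 1) = ?S x}"
    using finite_subset by blast
  moreover have "real_polynomial_function (\<lambda>x. pochhammer (x + lam + 1) (n - 1))"
    by (intro real_polynomial_function_pochhammer real_polynomial_function.intros(1,2,3)
        bounded_linear_ident)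
  moreover have "real_polynomial_function ?S"
    by (intro real_polynomial_function_sum real_polynomial_function.intros(2,4)
        real_polynomial_function_dfall) auto
  ultimately show ?thesis
    using real_polynomial_function_eq_if_infinite_agreement by blast
qed

lemma pochhammer_div_forward_diff:
  fixes x a :: real
  assumes "n \<ge> 1"
  shows "pochhammer (x + 1 + a) n / of_nat n - pochhammer (x + a) n / of_nat n
    = pochhammer (x + a + 1) (n - 1)"
proof -
  obtain m where n: "n = Suc m"
    using assms by (cases n) auto
  have shift: "x + 1 + a = x + a + 1"
    by simp
  have "pochhammer (x + a + 1) n - pochhammer (x + a) n = of_nat n * pochhammer (x + a + 1) m"
    unfolding n pochhammer_Suc[of "x + a + 1"] pochhammer_rec[of "x + a"] by (simp add: algebra_simps)
  then show ?thesis
    unfolding shift diff_divide_distrib[symmetric] by (simp add: n del: of_nat_Suc)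
qed

lemma dharmonic_uminus_eq_pochhammer:
  assumes "lam \<noteq> 0"
  shows "lam * fact n * dharmonic n (- lam) = pochhammer (lam + 1) n - fact n"
proof (induction n)
  case 0
  then show ?case
    by (simp add: dharmonic_def)
next
  case (Suc n)
  have "(1 / (- lam)) * ((- lam) gchoose Suc n) * (-1) ^ (Suc n - 1)
      = pochhammer (lam + 1) n / fact (Suc n)"
    using assms by (simp add: gbinomial_pochhammer pochhammer_rec flip: power_add)
  then have "dharmonic (Suc n) (- lam) = dharmonic n (- lam) + pochhammer (lam + 1) n / fact (Suc n)"
    unfolding dharmonic_def by simp
  then have "lam * fact (Suc n) * dharmonic (Suc n) (- lam)
      = of_nat (Suc n) * (lam * fact n * dharmonic n (- lam)) + lam * pochhammer (lam + 1) n"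
    by (simp add: field_simps del: of_nat_Suc)
  also have "\<dots> = pochhammer (lam + 1) (Suc n) - fact (Suc n)"
    unfolding Suc.IH by (simp add: pochhammer_Suc algebra_simps)
  finally show ?case .
qed

theorem theorem8:
  fixes lambda :: real and n :: nat
  assumes "lambda \<noteq> 0" and "n \<ge> 1"
  shows "fact (n - 1) * dharmonic n (- lambda) =
         (\<Sum>k=1..n. (-1) ^ (n - k) * dbernoulli (k - 1) lambda (1 - lambda)
                      * dstirling1 (- lambda) n k)"
proof -
  define c where "c k = (-1) ^ (n - k) * dstirling1 (- lambda) n k" for k
  define R where "R x = pochhammer (x + lambda) n / of_nat n" for x
  have R_diff: "R (x + 1) - R x = (\<Sum>k=1..n. c k * dfall lambda (k - 1) x)" for x
    unfolding R_def c_def pochhammer_div_forward_diff[OF assms(2)]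
    by (rule pochhammer_pred_eq_sum_dstirling1[OF assms])
  have "real_polynomial_function R"
    unfolding R_def
    by (intro real_polynomial_function_divide real_polynomial_function_pochhammer
        real_polynomial_function.intros(1,2,3) bounded_linear_ident)
  then have "lambda * (\<Sum>k=1..n. c k * dbernoulli (k - 1) lambda (1 - lambda)) = R 1 - R (1 - lambda)"
    using sum_dbernoulli_eq_antidifference_diff[OF assms(1) _ R_diff, of "1 - lambda"] by simp
  also have "\<dots> = lambda * fact n * dharmonic n (- lambda) / of_nat n"
    unfolding dharmonic_uminus_eq_pochhammer[OF assms(1)] R_def
    by (simp add: pochhammer_fact add.commute diff_divide_distrib)
  also have "\<dots> = lambda * (fact (n - 1) * dharmonic n (- lambda))"
    using assms(2) by (simp add: fact_reduce[of n])
  finally have "(\<Sum>k=1..n. c k * dbernoulli (k - 1) lambda (1 - lambda)) = fact (n - 1) * dharmonic n (- lambda)"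
    using assms(1) by simp
  moreover have "(\<Sum>k=1..n. (-1) ^ (n - k) * dbernoulli (k - 1) lambda (1 - lambda) * dstirling1 (- lambda) n k)
      = (\<Sum>k=1..n. c k * dbernoulli (k - 1) lambda (1 - lambda))"
    unfolding c_def by (intro sum.cong refl) (simp only: mult_ac)
  ultimately show ?thesis
    by simp
qed

end
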